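(* Let $G\subset\mathrm{Homeo}_+([0,1])$ be a group which has linked fixed points (i.e. is not without linked fixed points). Then there exist $h_1,h_2\in G$ and a segment $I\subset[0,1]$ such that $h_1(I)$ and $h_2(I)$ are disjoint segments contained in $I$.
   Context: For a group $G$ of homeomorphisms of $[0,1]$, a pair of successive fixed points of $G$ is a pair $\{a,b\}$, $a<b$, such that $(a,b)$ is a connected component of $[0,1]\setminus \mathrm{Fix}(g)$ for some $g\in G$. Two pairs $\{a,b\}$ and $\{c,d\}$ are linked if $(a,b)\cap\{c,d\}$ or $(c,d)\cap\{a,b\}$ consists of exactly one point. $G$ has linked fixed points if some two pairs of successive fixed points of $G$ are linked. *)

theory Defs
  imports "HOL-Analysis.Analysis"
begin

text \<open>Orientation-preserving homeomorphisms of [0,1], as real functions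
  considered on {0..1} (values outside {0..1} are irrelevant).\<close>
definition homeo_plus01 :: "(real \<Rightarrow> real) \<Rightarrow> bool" where
  "homeo_plus01 g \<longleftrightarrow> (\<exists>g'. homeomorphism {0..1} {0..1} g g') \<and> strict_mono_on {0..1} g"

text \<open>A subgroup of Homeo_+([0,1]); elements are identified when they agree on {0..1}.\<close>
definition homeo_group01 :: "(real \<Rightarrow> real) set \<Rightarrow> bool" where
  "homeo_group01 G \<longleftrightarrow>
     (\<forall>g\<in>G. homeo_plus01 g) \<and>
     (\<exists>e\<in>G. \<forall>x\<in>{0..1}. e x = x) \<and>
     (\<forall>g\<in>G. \<forall>h\<in>G. \<exists>k\<in>G. \<forall>x\<in>{0..1}. k x = g (h x)) \<and>
     (\<forall>g\<in>G. \<exists>k\<in>G. \<forall>x\<in>{0..1}. k (g x) = x)"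

definition Fix01 :: "(real \<Rightarrow> real) \<Rightarrow> real set" where
  "Fix01 g = {x \<in> {0..1}. g x = x}"

definition succ_fixed_pair :: "(real \<Rightarrow> real) set \<Rightarrow> real \<Rightarrow> real \<Rightarrow> bool" where
  "succ_fixed_pair G a b \<longleftrightarrow> a < b \<and>
     (\<exists>g\<in>G. {a<..<b} \<in> components ({0..1} - Fix01 g))"

definition linked_pairs :: "real \<Rightarrow> real \<Rightarrow> real \<Rightarrow> real \<Rightarrow> bool" where
  "linked_pairs a b c d \<longleftrightarrow>
     card ({a<..<b} \<inter> {c, d}) = 1 \<or> card ({c<..<d} \<inter> {a, b}) = 1"

definition has_linked_fixed_points :: "(real \<Rightarrow> real) set \<Rightarrow> bool" where
  "has_linked_fixed_points G \<longleftrightarrow>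
     (\<exists>a b c d. succ_fixed_pair G a b \<and> succ_fixed_pair G c d \<and> linked_pairs a b c d)"

end

theory Submission
  imports Defs
begin

(* Write fixed_gap g a b when a < b are fixed points of g in [0,1] with no fixed point
   of g strictly between them; every pair of successive fixed points of G is a fixed gap
   of some element of G.  Linked pairs {a,b}, {c,d} give, up to exchanging the pairs and
   up to conjugating G by the reflection x \<mapsto> 1 - x, the configuration a < c < b \<le> d.

   In that configuration choose (replacing elements by their inverses if necessary) f in G
   with fixed gap (c,d) moving every point of (c,d) down, and g in G with fixed gap (a,b)
   moving every point of (a,b) up.  Iterates of f push each point of (c,d) towards c.  For
   c < y < b, the segment I = [c,y] and the elements h1 = f^N, h2 = f^M \<circ> g with suitable
   M, N satisfy c \<le> h1 c, h1 y < h2 c, h2 y \<le> y, so h1(I), h2(I) are disjoint subsegments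
   of I. *)

lemma group_strict_mono:
  assumes "homeo_group01 G" "g \<in> G" shows "strict_mono_on {0..1} g"
  using assms unfolding homeo_group01_def homeo_plus01_def by blast

lemma group_continuous:
  assumes "homeo_group01 G" "g \<in> G" shows "continuous_on {0..1} g"
  using assms unfolding homeo_group01_def homeo_plus01_def homeomorphism_def by blast

lemma group_maps_unit:
  assumes "homeo_group01 G" "g \<in> G" "x \<in> {0..1}" shows "g x \<in> {0..1}"
proof -
  obtain g' where "homeomorphism {0..1} {0..1} g g'"
    using assms(1,2) unfolding homeo_group01_def homeo_plus01_def by blast
  then show ?thesis using assms(3) unfolding homeomorphism_def by blast
qed

lemma group_identity:
  assumes "homeo_group01 G"
  obtains e where "e \<in> G" "\<And>x. x \<in> {0..1} \<Longrightarrow> e x = x"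
proof -
  have "\<exists>e\<in>G. \<forall>x\<in>{0..1}. e x = x"
    using assms unfolding homeo_group01_def by blast
  then show ?thesis using that by blast
qed

lemma group_compose:
  assumes "homeo_group01 G" "g \<in> G" "h \<in> G"
  obtains k where "k \<in> G" "\<And>x. x \<in> {0..1} \<Longrightarrow> k x = g (h x)"
proof -
  have "\<exists>k\<in>G. \<forall>x\<in>{0..1}. k x = g (h x)"
    using assms unfolding homeo_group01_def by blast
  then show ?thesis using that by blast
qed

lemma group_inverse:
  assumes "homeo_group01 G" "g \<in> G"
  obtains k where "k \<in> G" "\<And>x. x \<in> {0..1} \<Longrightarrow> k (g x) = x"
proof -
  have "\<exists>k\<in>G. \<forall>x\<in>{0..1}. k (g x) = x"
    using assms unfolding homeo_group01_def by blast
  then show ?thesis using that by blast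
qed

lemma group_iterate:
  assumes G: "homeo_group01 G" and f: "f \<in> G"
  obtains h where "h \<in> G" "\<And>x. x \<in> {0..1} \<Longrightarrow> h x = (f ^^ n) x"
proof -
  have "\<exists>h\<in>G. \<forall>x\<in>{0..1}. h x = (f ^^ n) x"
  proof (induction n)
    case 0
    obtain e where "e \<in> G" "\<And>x. x \<in> {0..1} \<Longrightarrow> e x = x"
      using group_identity[OF G] by blast
    then show ?case by (intro bexI[of _ e]) auto
  next
    case (Suc n)
    then obtain h where h: "h \<in> G" "\<forall>x\<in>{0..1}. h x = (f ^^ n) x" by blast
    obtain k where "k \<in> G" "\<And>x. x \<in> {0..1} \<Longrightarrow> k x = f (h x)"
      using group_compose[OF G f h(1)] by blast
    with h show ?case by (intro bexI[of _ k]) auto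
  qed
  then show ?thesis using that by blast
qed

lemma group_iterate_after:
  assumes G: "homeo_group01 G" and "f \<in> G" "g \<in> G"
  obtains h where "h \<in> G" "\<And>x. x \<in> {0..1} \<Longrightarrow> h x = (f ^^ n) (g x)"
proof -
  obtain k where k: "k \<in> G" "\<And>x. x \<in> {0..1} \<Longrightarrow> k x = (f ^^ n) x"
    using group_iterate[OF G \<open>f \<in> G\<close>] by blast
  obtain h where "h \<in> G" "\<And>x. x \<in> {0..1} \<Longrightarrow> h x = k (g x)"
    using group_compose[OF G k(1) \<open>g \<in> G\<close>] by blast
  then show ?thesis using that k(2) group_maps_unit[OF G \<open>g \<in> G\<close>] by auto
qed

section \<open>Orbits of a map contracting an interval towards its left endpoint\<close>

lemma orbit_descends:
  fixes f :: "real \<Rightarrow> real"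
  assumes contract: "\<forall>y\<in>{c<..<d}. c < f y \<and> f y < y" and x: "x \<in> {c<..<d}"
  shows "(f ^^ n) x \<in> {c<..x}"
proof (induction n)
  case 0
  then show ?case using x by simp
next
  case (Suc n)
  then have "(f ^^ n) x \<in> {c<..<d}" using x by auto
  then show ?case using Suc contract by fastforce
qed

text \<open>If moreover f is continuous, the orbit converges to c: its limit would otherwise
  be a fixed point inside (c,d).\<close>

lemma orbit_converges:
  fixes f :: "real \<Rightarrow> real"
  assumes cont: "continuous_on {c..d} f"
    and contract: "\<forall>y\<in>{c<..<d}. c < f y \<and> f y < y" and x: "x \<in> {c<..<d}"
  shows "(\<lambda>n. (f ^^ n) x) \<longlonglongrightarrow> c"
proof -
  define s where "s n = (f ^^ n) x" for n
  have s_in: "s n \<in> {c<..x}" for n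
    unfolding s_def by (rule orbit_descends[OF contract x])
  have s_Suc: "s (Suc n) = f (s n)" for n
    by (simp add: s_def)
  have "decseq s"
  proof (rule decseq_SucI)
    fix n
    have "s n \<in> {c<..<d}" using s_in[of n] x by auto
    then show "s (Suc n) \<le> s n" using contract s_Suc by (simp add: less_imp_le)
  qed
  have lower: "c \<le> s n" for n
    using s_in[of n] by simp
  obtain L where L: "s \<longlonglongrightarrow> L" "\<forall>n. L \<le> s n"
    using decseq_convergent[OF \<open>decseq s\<close>, of c] lower by blast
  have "c \<le> L"
    using LIMSEQ_le_const[OF L(1), of c] lower by blast
  moreover have "L \<le> x"
    using L(2) by (metis funpow_0 s_def)
  ultimately have L_in: "L \<in> {c..d}"
    using x by simp
  have "s n \<in> {c..d}" for n
    using s_in[of n] x by simp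
  then have "eventually (\<lambda>n. s n \<in> {c..d}) sequentially"
    by simp
  then have "(\<lambda>n. f (s n)) \<longlonglongrightarrow> f L"
    by (rule continuous_on_tendsto_compose[OF cont L(1) L_in])
  moreover have "(\<lambda>n. f (s n)) \<longlonglongrightarrow> L"
    using LIMSEQ_Suc[OF L(1)] by (simp add: s_Suc)
  ultimately have fixed: "f L = L"
    by (rule LIMSEQ_unique)
  have "L = c"
  proof (rule ccontr)
    assume "L \<noteq> c"
    then have "L \<in> {c<..<d}" using L_in \<open>L \<le> x\<close> x by auto
    then show False using contract fixed by fastforce
  qed
  with L(1) show ?thesis by (simp add: s_def[abs_def])
qed

lemma orbit_eventually_below:
  fixes f :: "real \<Rightarrow> real"
  assumes "continuous_on {c..d} f" "\<forall>y\<in>{c<..<d}. c < f y \<and> f y < y" "x \<in> {c<..<d}"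
    and "c < z"
  obtains N where "(f ^^ N) x < z"
proof -
  have "eventually (\<lambda>n. (f ^^ n) x < z) sequentially"
    using order_tendstoD(2)[OF orbit_converges[OF assms(1-3)] assms(4)] .
  then show ?thesis using that by (auto simp: eventually_sequentially)
qed

section \<open>Fixed gaps\<close>

definition fixed_gap :: "(real \<Rightarrow> real) \<Rightarrow> real \<Rightarrow> real \<Rightarrow> bool" where
  "fixed_gap g a b \<longleftrightarrow>
     0 \<le> a \<and> a < b \<and> b \<le> 1 \<and> g a = a \<and> g b = b \<and> (\<forall>x\<in>{a<..<b}. g x \<noteq> x)"

text \<open>The endpoints of an interval component of the complement of Fix(g) are fixed
  points of g, since adding a non-fixed endpoint would give a larger connected set.\<close>

lemma component_endpoint_fixed:
  assumes comp: "{a<..<b} \<in> components ({0..1} - Fix01 g)" and "a < b"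
    and e: "e \<in> {a, b}" "e \<in> {0..1}"
  shows "g e = e"
proof (rule ccontr)
  assume "g e \<noteq> e"
  then have "e \<notin> Fix01 g" by (simp add: Fix01_def)
  then have sub: "insert e {a<..<b} \<subseteq> {0..1} - Fix01 g"
    using in_components_subset[OF comp] e(2) by blast
  have "insert e {a<..<b} \<subseteq> closure {a<..<b}"
    using \<open>a < b\<close> e(1) by auto
  then have "connected (insert e {a<..<b})"
    by (rule connected_intermediate_closure[OF connected_Ioo subset_insertI])
  moreover have "{a<..<b} \<inter> insert e {a<..<b} \<noteq> {}"
    using \<open>a < b\<close> by auto
  ultimately have "insert e {a<..<b} \<subseteq> {a<..<b}"
    using components_maximal[OF comp _ sub] by blast
  then show False using e(1) by auto
qed

lemma succ_fixed_pair_gap: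
  assumes "succ_fixed_pair G a b"
  obtains g where "g \<in> G" "fixed_gap g a b"
proof -
  obtain g where "a < b" "g \<in> G" and comp: "{a<..<b} \<in> components ({0..1} - Fix01 g)"
    using assms unfolding succ_fixed_pair_def by blast
  have sub: "{a<..<b} \<subseteq> {0..1} - Fix01 g"
    using in_components_subset[OF comp] .
  then have "{a<..<b} \<subseteq> {0..1}" by blast
  then have "0 \<le> a" "b \<le> 1"
    using \<open>a < b\<close> greaterThanLessThan_subseteq_atLeastAtMost_iff by blast+
  moreover have "g a = a" "g b = b"
    using component_endpoint_fixed[OF comp \<open>a < b\<close>] \<open>0 \<le> a\<close> \<open>b \<le> 1\<close> \<open>a < b\<close> by simp_all
  moreover have "\<forall>x\<in>{a<..<b}. g x \<noteq> x"
    using sub by (auto simp: Fix01_def)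
  ultimately show ?thesis using that \<open>g \<in> G\<close> \<open>a < b\<close> unfolding fixed_gap_def by blast
qed

text \<open>By the intermediate value theorem a continuous g moves all points of a fixed gap in
  the same direction.\<close>

lemma fixed_gap_direction:
  assumes cont: "continuous_on {0..1} g" and gap: "fixed_gap g a b"
  shows "(\<forall>x\<in>{a<..<b}. g x < x) \<or> (\<forall>x\<in>{a<..<b}. x < g x)"
proof (rule ccontr)
  assume "\<not> ?thesis"
  then obtain u v where u: "u \<in> {a<..<b}" "\<not> g u < u" and v: "v \<in> {a<..<b}" "\<not> v < g v"
    by blast
  have moved: "g x \<noteq> x" if "x \<in> {a<..<b}" for x
    using gap that unfolding fixed_gap_def by blast
  have "u < g u" "g v < v"
    using u v moved[of u] moved[of v] by linarith+
  have between: "{min u v..max u v} \<subseteq> {a<..<b}"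
    using u(1) v(1) by auto
  then have "{min u v..max u v} \<subseteq> {0..1}"
    using gap unfolding fixed_gap_def by auto
  then have cont_between: "continuous_on {min u v..max u v} (\<lambda>x. g x - x)"
    by (intro continuous_intros continuous_on_subset[OF cont])
  have "\<exists>x\<in>{min u v..max u v}. g x - x = 0"
  proof (cases "u \<le> v")
    case True
    then show ?thesis
      using IVT2'[of "\<lambda>x. g x - x" v 0 u] \<open>u < g u\<close> \<open>g v < v\<close> cont_between by auto
  next
    case False
    then show ?thesis
      using IVT'[of "\<lambda>x. g x - x" v 0 u] \<open>u < g u\<close> \<open>g v < v\<close> cont_between by auto
  qed
  then show False
    using between moved by fastforce
qed

lemma inverse_fixed_gap:
  assumes G: "homeo_group01 G" "g \<in> G" "k \<in> G" and inv: "\<And>x. x \<in> {0..1} \<Longrightarrow> k (g x) = x"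
    and gap: "fixed_gap g a b"
  shows "\<And>x. x \<in> {a<..<b} \<Longrightarrow> x < g x \<Longrightarrow> k x < x"
    and "\<And>x. x \<in> {a<..<b} \<Longrightarrow> g x < x \<Longrightarrow> x < k x"
    and "fixed_gap k a b"
proof -
  have mono: "strict_mono_on {0..1} k"
    using group_strict_mono[OF G(1,3)] .
  have unit: "x \<in> {0..1}" "g x \<in> {0..1}" if "x \<in> {a<..<b}" for x
    using that gap group_maps_unit[OF G(1,2)] unfolding fixed_gap_def by auto
  show down: "k x < x" if "x \<in> {a<..<b}" "x < g x" for x
    using strict_mono_onD[OF mono unit[OF that(1)] that(2)] inv unit[OF that(1)] by simp
  show up: "x < k x" if "x \<in> {a<..<b}" "g x < x" for x
    using strict_mono_onD[OF mono unit(2,1)[OF that(1)] that(2)] inv unit[OF that(1)] by simp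
  have ends: "k a = a" "k b = b"
    using gap inv[of a] inv[of b] unfolding fixed_gap_def by auto
  have "k x \<noteq> x" if "x \<in> {a<..<b}" for x
  proof -
    have "g x \<noteq> x" using gap that unfolding fixed_gap_def by blast
    then show ?thesis using down[OF that] up[OF that] by linarith
  qed
  then show "fixed_gap k a b"
    using gap ends unfolding fixed_gap_def by blast
qed

lemma fixed_gap_oriented:
  assumes G: "homeo_group01 G" "g \<in> G" and gap: "fixed_gap g a b"
  shows "\<exists>f\<in>G. fixed_gap f a b \<and> (\<forall>x\<in>{a<..<b}. f x < x)"
    and "\<exists>f\<in>G. fixed_gap f a b \<and> (\<forall>x\<in>{a<..<b}. x < f x)"
proof -
  obtain k where k: "k \<in> G" "\<And>x. x \<in> {0..1} \<Longrightarrow> k (g x) = x"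
    using group_inverse[OF G] by blast
  note k_gap = inverse_fixed_gap[OF G k gap]
  have direction: "(\<forall>x\<in>{a<..<b}. g x < x) \<or> (\<forall>x\<in>{a<..<b}. x < g x)"
    using fixed_gap_direction[OF group_continuous[OF G] gap] .
  show "\<exists>f\<in>G. fixed_gap f a b \<and> (\<forall>x\<in>{a<..<b}. f x < x)"
  proof (cases "\<forall>x\<in>{a<..<b}. g x < x")
    case True
    then show ?thesis using G(2) gap by blast
  next
    case False
    then have "\<forall>x\<in>{a<..<b}. x < g x" using direction by blast
    then show ?thesis using k(1) k_gap(1,3) by blast
  qed
  show "\<exists>f\<in>G. fixed_gap f a b \<and> (\<forall>x\<in>{a<..<b}. x < f x)"
  proof (cases "\<forall>x\<in>{a<..<b}. x < g x")
    case True
    then show ?thesis using G(2) gap by blast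
  next
    case False
    then have "\<forall>x\<in>{a<..<b}. g x < x" using direction by blast
    then show ?thesis using k(1) k_gap(2,3) by blast
  qed
qed

section \<open>The reflection symmetry x \<mapsto> 1 - x\<close>

text \<open>Conjugation by the reflection of [0,1]; it reverses the order of fixed points and
  lets one reduce a configuration to its mirror image.\<close>

definition reflect01 :: "(real \<Rightarrow> real) \<Rightarrow> real \<Rightarrow> real" where
  "reflect01 g x = 1 - g (1 - x)"

lemma reflect01_comp: "reflect01 g = (\<lambda>x. 1 - x) \<circ> (g \<circ> (\<lambda>x. 1 - x))"
  by (simp add: fun_eq_iff reflect01_def)

lemma homeomorphism_reflection: "homeomorphism {0..1} {0..1} (\<lambda>x::real. 1 - x) (\<lambda>x. 1 - x)"
  unfolding homeomorphism_def by (auto intro!: continuous_intros)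

lemma homeo_plus01_reflect:
  assumes "homeo_plus01 g" shows "homeo_plus01 (reflect01 g)"
proof -
  obtain g' where hom: "homeomorphism {0..1} {0..1} g g'" and mono: "strict_mono_on {0..1} g"
    using assms unfolding homeo_plus01_def by blast
  have "homeomorphism {0..1} {0..1} (g \<circ> (\<lambda>x. 1 - x)) ((\<lambda>x. 1 - x) \<circ> g')"
    by (rule homeomorphism_compose[OF homeomorphism_reflection hom])
  then have "homeomorphism {0..1} {0..1} (reflect01 g) (((\<lambda>x. 1 - x) \<circ> g') \<circ> (\<lambda>x. 1 - x))"
    unfolding reflect01_comp by (rule homeomorphism_compose[OF _ homeomorphism_reflection])
  moreover have "strict_mono_on {0..1} (reflect01 g)"
  proof (rule strict_mono_onI)
    fix x y :: real assume "x \<in> {0..1}" "y \<in> {0..1}" "x < y"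
    then have "g (1 - y) < g (1 - x)" using strict_mono_onD[OF mono] by simp
    then show "reflect01 g x < reflect01 g y" by (simp add: reflect01_def)
  qed
  ultimately show ?thesis
    unfolding homeo_plus01_def by blast
qed

lemma homeo_group01_reflect:
  assumes G: "homeo_group01 G" shows "homeo_group01 (reflect01 ` G)"
  unfolding homeo_group01_def
proof (intro conjI ballI)
  show "homeo_plus01 g" if g_in: "g \<in> reflect01 ` G" for g
  proof -
    obtain g0 where "g0 \<in> G" and g: "g = reflect01 g0" using g_in by blast
    then have "homeo_plus01 g0" using G unfolding homeo_group01_def by blast
    then show ?thesis unfolding g by (rule homeo_plus01_reflect)
  qed
  obtain e where "e \<in> G" and e: "\<And>x. x \<in> {0..1} \<Longrightarrow> e x = x"
    using group_identity[OF G] by blast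
  have "reflect01 e x = x" if "x \<in> {0..1}" for x
    using e[of "1 - x"] that by (simp add: reflect01_def)
  then show "\<exists>e\<in>reflect01 ` G. \<forall>x\<in>{0..1}. e x = x"
    using \<open>e \<in> G\<close> by (intro bexI[of _ "reflect01 e"]) auto
  show "\<exists>k\<in>reflect01 ` G. \<forall>x\<in>{0..1}. k x = g (h x)"
    if gh_in: "g \<in> reflect01 ` G" "h \<in> reflect01 ` G" for g h
  proof -
    obtain g0 h0 where "g0 \<in> G" "h0 \<in> G" and gh: "g = reflect01 g0" "h = reflect01 h0"
      using gh_in by blast
    obtain k where "k \<in> G" and k: "\<And>x. x \<in> {0..1} \<Longrightarrow> k x = g0 (h0 x)"
      using group_compose[OF G \<open>g0 \<in> G\<close> \<open>h0 \<in> G\<close>] by blast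
    have "reflect01 k x = g (h x)" if "x \<in> {0..1}" for x
      using k[of "1 - x"] that by (simp add: gh reflect01_def)
    then show ?thesis using \<open>k \<in> G\<close> by (intro bexI[of _ "reflect01 k"]) auto
  qed
  show "\<exists>k\<in>reflect01 ` G. \<forall>x\<in>{0..1}. k (g x) = x" if g_in: "g \<in> reflect01 ` G" for g
  proof -
    obtain g0 where "g0 \<in> G" and g: "g = reflect01 g0"
      using g_in by blast
    obtain k where "k \<in> G" and k: "\<And>x. x \<in> {0..1} \<Longrightarrow> k (g0 x) = x"
      using group_inverse[OF G \<open>g0 \<in> G\<close>] by blast
    have "reflect01 k (g x) = x" if "x \<in> {0..1}" for x
      using k[of "1 - x"] that by (simp add: g reflect01_def)
    then show ?thesis using \<open>k \<in> G\<close> by (intro bexI[of _ "reflect01 k"]) auto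
  qed
qed

lemma fixed_gap_reflect:
  assumes gap: "fixed_gap g a b" shows "fixed_gap (reflect01 g) (1 - b) (1 - a)"
  unfolding fixed_gap_def
proof (intro conjI ballI)
  show "0 \<le> 1 - b" "1 - b < 1 - a" "1 - a \<le> 1"
    using gap unfolding fixed_gap_def by simp_all
  show "reflect01 g (1 - b) = 1 - b" "reflect01 g (1 - a) = 1 - a"
    using gap unfolding fixed_gap_def reflect01_def by simp_all
  show "reflect01 g x \<noteq> x" if "x \<in> {1 - b<..<1 - a}" for x
  proof -
    have "1 - x \<in> {a<..<b}" using that by auto
    then have "g (1 - x) \<noteq> 1 - x" using gap unfolding fixed_gap_def by blast
    then show ?thesis by (simp add: reflect01_def)
  qed
qed

section \<open>Ping-pong segments\<close>

definition has_pingpong_segment :: "(real \<Rightarrow> real) set \<Rightarrow> bool" where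
  "has_pingpong_segment G \<longleftrightarrow>
     (\<exists>h1\<in>G. \<exists>h2\<in>G. \<exists>p q. 0 \<le> p \<and> p < q \<and> q \<le> 1 \<and>
        h1 ` {p..q} \<subseteq> {p..q} \<and> h2 ` {p..q} \<subseteq> {p..q} \<and> h1 ` {p..q} \<inter> h2 ` {p..q} = {})"

lemma pingpong_segment_unreflect:
  assumes "has_pingpong_segment (reflect01 ` G)" shows "has_pingpong_segment G"
proof -
  obtain h1 h2 p q where h: "h1 \<in> reflect01 ` G" "h2 \<in> reflect01 ` G"
    and pq: "0 \<le> p" "p < q" "q \<le> 1"
    and sub: "h1 ` {p..q} \<subseteq> {p..q}" "h2 ` {p..q} \<subseteq> {p..q}"
    and disj: "h1 ` {p..q} \<inter> h2 ` {p..q} = {}"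
    using assms unfolding has_pingpong_segment_def by (elim bexE exE conjE) simp
  obtain k1 k2 where k: "k1 \<in> G" "k2 \<in> G" and hk: "h1 = reflect01 k1" "h2 = reflect01 k2"
    using h by blast
  define r :: "real \<Rightarrow> real" where "r = (-) 1"
  have "inj r" unfolding r_def by (simp add: inj_on_def)
  have I: "{p..q} = r ` {1 - q..1 - p}" by (simp add: r_def)
  have image: "reflect01 k ` {p..q} = r ` (k ` {1 - q..1 - p})" for k
  proof -
    have "reflect01 k ` {p..q} = r ` (k ` (r ` {p..q}))"
      by (simp only: reflect01_comp image_comp r_def)
    also have "r ` {p..q} = {1 - q..1 - p}"
      by (simp add: r_def)
    finally show ?thesis .
  qed
  have "k1 ` {1 - q..1 - p} \<subseteq> {1 - q..1 - p}" "k2 ` {1 - q..1 - p} \<subseteq> {1 - q..1 - p}"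
    using sub unfolding hk image unfolding I inj_image_subset_iff[OF \<open>inj r\<close>] by simp_all
  moreover have "k1 ` {1 - q..1 - p} \<inter> k2 ` {1 - q..1 - p} = {}"
    using disj unfolding hk image image_Int[OF \<open>inj r\<close>, symmetric] by simp
  moreover have "0 \<le> 1 - q" "1 - q < 1 - p" "1 - p \<le> 1"
    using pq by simp_all
  ultimately show ?thesis
    unfolding has_pingpong_segment_def using k by blast
qed

lemma monotone_pingpong:
  fixes h1 h2 :: "'a::linorder \<Rightarrow> 'a"
  assumes mono: "mono_on {p..q} h1" "mono_on {p..q} h2" and "p \<le> q"
    and ends: "p \<le> h1 p" "h1 q < h2 p" "h2 q \<le> q"
  shows "h1 ` {p..q} \<subseteq> {p..q}" "h2 ` {p..q} \<subseteq> {p..q}" "h1 ` {p..q} \<inter> h2 ` {p..q} = {}"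
proof -
  have range1: "h1 ` {p..q} \<subseteq> {h1 p..h1 q}" and range2: "h2 ` {p..q} \<subseteq> {h2 p..h2 q}"
    using mono_onD[OF mono(1)] mono_onD[OF mono(2)] \<open>p \<le> q\<close> by auto
  have "h1 p \<le> h1 q" "h2 p \<le> h2 q"
    using mono_onD[OF mono(1)] mono_onD[OF mono(2)] \<open>p \<le> q\<close> by auto
  then have "{h1 p..h1 q} \<subseteq> {p..q}" "{h2 p..h2 q} \<subseteq> {p..q}"
    using ends by auto
  then show "h1 ` {p..q} \<subseteq> {p..q}" "h2 ` {p..q} \<subseteq> {p..q}"
    using range1 range2 by blast+
  show "h1 ` {p..q} \<inter> h2 ` {p..q} = {}"
    using range1 range2 ends(2) by fastforce
qed

lemma group_contraction:
  assumes G: "homeo_group01 G" and f: "f \<in> G" "f c = c" "\<forall>x\<in>{c<..<d}. f x < x"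
    and cd: "0 \<le> c" "d \<le> 1"
  shows "\<forall>x\<in>{c<..<d}. c < f x \<and> f x < x"
proof
  fix x assume x: "x \<in> {c<..<d}"
  then have "f c < f x"
    using strict_mono_onD[OF group_strict_mono[OF G f(1)], of c x] cd by auto
  then show "c < f x \<and> f x < x" using f(2,3) x by simp
qed

text \<open>For large M the element
  f^M \<circ> g maps [c,y] into (c,y), with left end u = f^M(g c) > c; for large N the iterate
  f^N maps [c,y] into [c,u).  This is a ping-pong pair on [c,y].\<close>

lemma pingpong_from_contraction:
  assumes G: "homeo_group01 G"
    and f: "f \<in> G" "f c = c" "\<forall>x\<in>{c<..<d}. f x < x"
    and g: "g \<in> G" "c < g c" "g y < d"
    and cyd: "0 \<le> c" "c < y" "y < d" "d \<le> 1"
  shows "has_pingpong_segment G"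
proof -
  have unit: "{c..d} \<subseteq> {0..1}"
    using cyd by auto
  have contract: "\<forall>x\<in>{c<..<d}. c < f x \<and> f x < x"
    using group_contraction[OF G f] cyd by simp
  have cont: "continuous_on {c..d} f"
    using continuous_on_subset[OF group_continuous[OF G f(1)] unit] .
  have "g c < g y"
    using strict_mono_onD[OF group_strict_mono[OF G g(1)], of c y] cyd by auto
  then have gc_in: "g c \<in> {c<..<d}" and gy_in: "g y \<in> {c<..<d}"
    using g cyd by auto
  obtain M where M: "(f ^^ M) (g y) < y"
    using orbit_eventually_below[OF cont contract gy_in \<open>c < y\<close>] .
  define u where "u = (f ^^ M) (g c)"
  have "c < u"
    using orbit_descends[OF contract gc_in, of M] by (simp add: u_def)
  obtain N where N: "(f ^^ N) y < u"
    using orbit_eventually_below[OF cont contract _ \<open>c < u\<close>] cyd by auto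
  obtain h1 where h1: "h1 \<in> G" "\<And>x. x \<in> {0..1} \<Longrightarrow> h1 x = (f ^^ N) x"
    using group_iterate[OF G f(1), where n = N] by blast
  obtain h2 where h2: "h2 \<in> G" "\<And>x. x \<in> {0..1} \<Longrightarrow> h2 x = (f ^^ M) (g x)"
    using group_iterate_after[OF G f(1) g(1), where n = M] by blast
  have I: "{c..y} \<subseteq> {0..1}"
    using cyd by auto
  have mono: "mono_on {c..y} h1" "mono_on {c..y} h2"
    using group_strict_mono[OF G h1(1)] group_strict_mono[OF G h2(1)] I
    by (auto intro: mono_on_subset strict_mono_on_imp_mono_on)
  have "(f ^^ N) c = c"
    using f(2) by (induction N) auto
  then have "c \<le> h1 c" "h1 y < h2 c" "h2 y \<le> y"
    using h1(2) h2(2) N M I cyd by (auto simp: u_def)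
  note pingpong = monotone_pingpong[OF mono less_imp_le[OF \<open>c < y\<close>] this]
  show ?thesis
    unfolding has_pingpong_segment_def
    using pingpong h1(1) h2(1) cyd(1,2) \<open>y < d\<close> \<open>d \<le> 1\<close>
    by (intro bexI[of _ h1] bexI[of _ h2] exI[of _ c] exI[of _ y]) auto
qed

text \<open>Crossing fixed gaps (a,b) and (c,d) with a < c < b \<le> d yield a ping-pong segment:
  orient the element with gap (c,d) downwards and the one with gap (a,b) upwards, and take
  y in (c,b); then g(y) < g(b) = b \<le> d.\<close>

lemma pingpong_from_crossing:
  assumes G: "homeo_group01 G" and g: "g \<in> G" "fixed_gap g a b" and f: "f \<in> G" "fixed_gap f c d"
    and order: "a < c" "c < b" "b \<le> d"
  shows "has_pingpong_segment G"
proof -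
  obtain f' where f': "f' \<in> G" "fixed_gap f' c d" "\<forall>x\<in>{c<..<d}. f' x < x"
    using fixed_gap_oriented(1)[OF G f] by blast
  obtain g' where g': "g' \<in> G" "fixed_gap g' a b" "\<forall>x\<in>{a<..<b}. x < g' x"
    using fixed_gap_oriented(2)[OF G g] by blast
  define y where "y = (c + b) / 2"
  have y: "c < y" "y < b"
    using order by (simp_all add: y_def)
  have "c < g' c"
    using g'(3) order by simp
  have "g' y < g' b"
    using strict_mono_onD[OF group_strict_mono[OF G g'(1)], of y b] y g'(2) order
    unfolding fixed_gap_def by simp
  then have "g' y < d"
    using g'(2) order unfolding fixed_gap_def by simp
  moreover have "f' c = c" "0 \<le> c" "d \<le> 1"
    using f'(2) unfolding fixed_gap_def by simp_all
  ultimately show ?thesis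
    using pingpong_from_contraction[OF G f'(1) _ f'(3) g'(1) \<open>c < g' c\<close>] y order by simp
qed

text \<open>The mirror configuration c \<le> a < d < b reduces to the previous one by reflection.\<close>

lemma pingpong_from_overlap:
  assumes G: "homeo_group01 G" and g: "g \<in> G" "fixed_gap g a b" and f: "f \<in> G" "fixed_gap f c d"
    and order: "(a < c \<and> c < b \<and> b \<le> d) \<or> (c \<le> a \<and> a < d \<and> d < b)"
  shows "has_pingpong_segment G"
  using order
proof
  assume "a < c \<and> c < b \<and> b \<le> d"
  then show ?thesis using pingpong_from_crossing[OF G g f] by simp
next
  assume mirror: "c \<le> a \<and> a < d \<and> d < b"
  have "has_pingpong_segment (reflect01 ` G)"
  proof (rule pingpong_from_crossing[OF homeo_group01_reflect[OF G]])
    show "reflect01 g \<in> reflect01 ` G" "reflect01 f \<in> reflect01 ` G"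
      using g(1) f(1) by simp_all
    show "fixed_gap (reflect01 g) (1 - b) (1 - a)" "fixed_gap (reflect01 f) (1 - d) (1 - c)"
      using fixed_gap_reflect g(2) f(2) by simp_all
    show "1 - b < 1 - d" "1 - d < 1 - a" "1 - a \<le> 1 - c"
      using mirror by simp_all
  qed
  then show ?thesis by (rule pingpong_segment_unreflect)
qed

lemma card_Int_pair_eq_1:
  assumes "card (S \<inter> {x, y}) = 1" "x \<noteq> y"
  shows "x \<in> S \<longleftrightarrow> y \<notin> S"
  using assms by (cases "x \<in> S"; cases "y \<in> S") (auto simp: Int_insert_right)

lemma linked_pairs_configurations:
  fixes a b c d :: real
  assumes "a < b" "c < d" "linked_pairs a b c d"
  shows "(a < c \<and> c < b \<and> b \<le> d) \<or> (c \<le> a \<and> a < d \<and> d < b) \<or>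
         (c < a \<and> a < d \<and> d \<le> b) \<or> (a \<le> c \<and> c < b \<and> b < d)"
proof -
  have "(c \<in> {a<..<b} \<longleftrightarrow> d \<notin> {a<..<b}) \<or> (a \<in> {c<..<d} \<longleftrightarrow> b \<notin> {c<..<d})"
    using assms card_Int_pair_eq_1 unfolding linked_pairs_def by (metis less_irrefl)
  then show ?thesis
    using assms(1,2) by auto
qed

theorem lemmal:
  fixes G :: "(real \<Rightarrow> real) set"
  assumes "homeo_group01 G"
    and "has_linked_fixed_points G"
  shows "\<exists>h1\<in>G. \<exists>h2\<in>G. \<exists>p q. 0 \<le> p \<and> p < q \<and> q \<le> 1 \<and>
           h1 ` {p..q} \<subseteq> {p..q} \<and> h2 ` {p..q} \<subseteq> {p..q} \<and>
           h1 ` {p..q} \<inter> h2 ` {p..q} = {}"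
proof -
  obtain a b c d where pairs: "succ_fixed_pair G a b" "succ_fixed_pair G c d"
    and linked: "linked_pairs a b c d"
    using assms(2) unfolding has_linked_fixed_points_def by blast
  obtain g where g: "g \<in> G" "fixed_gap g a b"
    using succ_fixed_pair_gap[OF pairs(1)] .
  obtain f where f: "f \<in> G" "fixed_gap f c d"
    using succ_fixed_pair_gap[OF pairs(2)] .
  have "a < b" "c < d"
    using g(2) f(2) unfolding fixed_gap_def by simp_all
  then have "has_pingpong_segment G"
    using linked_pairs_configurations[OF _ _ linked]
      pingpong_from_overlap[OF assms(1) g f] pingpong_from_overlap[OF assms(1) f g] by blast
  then show ?thesis
    unfolding has_pingpong_segment_def .
qed

end
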